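(* Let $G$ be a discrete group acting effectively on a mixing Smale space $(X,\varphi)$. Then there exists a nonempty finite set $P$ of periodic points of $\varphi$ with $\varphi(P)=P$ such that $gp\in P$ for every $g\in G$ and every $p\in P$.
   Context: A Smale space $(X,\varphi)$ is an infinite compact metric space with a homeomorphism $\varphi$ admitting a local product structure (a bracket map $[\cdot,\cdot]$ defined for nearby points with $[x,x]=x$, $[x,[y,z]]=[x,z]$, $[[x,y],z]=[x,z]$, $\varphi[x,y]=[\varphi x,\varphi y]$, with $\varphi$ uniformly contracting on stable local sets $\{[x,y]=y\}$ and $\varphi^{-1}$ uniformly contracting on unstable local sets $\{[x,y]=x\}$). Mixing: for all nonempty open $U,V$ there is $N$ with $\varphi^n(U)\cap V\neq\emptyset$ for all $n\geq N$. A point $x$ is periodic if $\varphi^k(x)=x$ for some $k\ge1$. An action of $G$ on $(X,\varphi)$ is a homomorphism $G\to\mathrm{Homeo}(X)$ with $g\varphi(x)=\varphi(gx)$; effective means every $g\neq e$ moves some point. *)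

theory Defs
  imports "HOL-Analysis.Analysis" "HOL-Algebra.Group_Action"
begin

text \<open>A Smale space on the carrier X (a subset of a metric space), with homeomorphism
  phi (inverse psi), bracket br defined on pairs at distance at most eps,
  and contraction constant lam (Putnam's axioms B1--B4, C1, C2).\<close>

definition smale_space ::
  "'a::metric_space set \<Rightarrow> ('a \<Rightarrow> 'a) \<Rightarrow> ('a \<Rightarrow> 'a) \<Rightarrow> ('a \<Rightarrow> 'a \<Rightarrow> 'a) \<Rightarrow> real \<Rightarrow> real \<Rightarrow> bool"
where
  "smale_space X phi psi br eps lam \<longleftrightarrow>
     compact X \<and> infinite X \<and> homeomorphism X X phi psi \<and>
     eps > 0 \<and> 0 < lam \<and> lam < 1 \<and>
     (\<forall>x\<in>X. \<forall>y\<in>X. dist x y \<le> eps \<longrightarrow> br x y \<in> X) \<and>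
     continuous_on {(x, y). x \<in> X \<and> y \<in> X \<and> dist x y \<le> eps} (\<lambda>(x, y). br x y) \<and>
     (\<forall>x\<in>X. br x x = x) \<and>
     (\<forall>x\<in>X. \<forall>y\<in>X. \<forall>z\<in>X.
        dist y z \<le> eps \<and> dist x (br y z) \<le> eps \<and> dist x z \<le> eps
        \<longrightarrow> br x (br y z) = br x z) \<and>
     (\<forall>x\<in>X. \<forall>y\<in>X. \<forall>z\<in>X.
        dist x y \<le> eps \<and> dist (br x y) z \<le> eps \<and> dist x z \<le> eps
        \<longrightarrow> br (br x y) z = br x z) \<and>
     (\<forall>x\<in>X. \<forall>y\<in>X.
        dist x y \<le> eps \<and> dist (phi x) (phi y) \<le> eps
        \<longrightarrow> phi (br x y) = br (phi x) (phi y)) \<and>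
     (\<forall>x\<in>X. \<forall>y\<in>X. dist x y \<le> eps \<and> br x y = y
        \<longrightarrow> dist (phi x) (phi y) \<le> lam * dist x y) \<and>
     (\<forall>x\<in>X. \<forall>y\<in>X. dist x y \<le> eps \<and> br x y = x
        \<longrightarrow> dist (psi x) (psi y) \<le> lam * dist x y)"

definition mixing :: "'a::topological_space set \<Rightarrow> ('a \<Rightarrow> 'a) \<Rightarrow> bool" where
  "mixing X phi \<longleftrightarrow>
     (\<forall>U V. openin (top_of_set X) U \<and> openin (top_of_set X) V \<and> U \<noteq> {} \<and> V \<noteq> {}
        \<longrightarrow> (\<exists>N. \<forall>n\<ge>N. (phi ^^ n) ` U \<inter> V \<noteq> {}))"

definition periodic_point :: "('a \<Rightarrow> 'a) \<Rightarrow> 'a \<Rightarrow> bool" where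
  "periodic_point phi x \<longleftrightarrow> (\<exists>k\<ge>1. (phi ^^ k) x = x)"

definition smale_action :: "('g, 'b) monoid_scheme \<Rightarrow> 'a::topological_space set \<Rightarrow> ('a \<Rightarrow> 'a) \<Rightarrow> ('g \<Rightarrow> 'a \<Rightarrow> 'a) \<Rightarrow> bool" where
  "smale_action G X phi act \<longleftrightarrow>
     group_action G X act \<and>
     (\<forall>g\<in>carrier G. continuous_on X (act g)) \<and>
     (\<forall>g\<in>carrier G. \<forall>x\<in>X. act g (phi x) = phi (act g x))"

definition effective_action :: "('g, 'b) monoid_scheme \<Rightarrow> 'a set \<Rightarrow> ('g \<Rightarrow> 'a \<Rightarrow> 'a) \<Rightarrow> bool" where
  "effective_action G X act \<longleftrightarrow>
     (\<forall>g\<in>carrier G. g \<noteq> \<one>\<^bsub>G\<^esub> \<longrightarrow> (\<exists>x\<in>X. act g x \<noteq> x))"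

end

theory Submission
  imports Defs
begin

text \<open>Mixing provides a point \<open>y\<close> and an arbitrarily large \<open>N\<close> with \<open>(phi ^^ N) y\<close> close to \<open>y\<close>.
  Bracketing with \<open>(phi ^^ N) y\<close> and pulling back \<open>N\<close> steps, repeatedly, yields points whose forward
  orbits follow the periodic pseudo-orbit \<open>y, phi y, \<dots>, (phi ^^ (N - 1)) y, y, \<dots>\<close> for arbitrarily many
  periods. Suitable iterates of these points accumulate at a point whose whole orbit stays close to the
  orbit of its \<open>phi ^^ N\<close>-image, so by expansiveness it is fixed by \<open>phi ^^ N\<close>. Expansiveness also makes
  the fixed point set of \<open>phi ^^ N\<close> finite, and this set is invariant under \<open>phi\<close> and under every map
  commuting with \<open>phi\<close>, in particular under the group.\<close>

lemma homeomorphism_funpow: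
  assumes "homeomorphism S S f g"
  shows "homeomorphism S S (f ^^ n) (g ^^ n)"
proof (induction n)
  case 0
  then show ?case by (simp add: homeomorphism_ident id_def)
next
  case (Suc n)
  from homeomorphism_compose[OF Suc assms] show ?case
    by (metis funpow.simps(2) funpow_Suc_right)
qed

lemma nonneg_le_geometric_imp_zero:
  fixes d q C :: real
  assumes "0 \<le> d" "0 \<le> q" "q < 1" "\<And>k. d \<le> q ^ k * C"
  shows "d = 0"
proof -
  have "(\<lambda>k. q ^ k * C) \<longlonglongrightarrow> 0"
    using assms(2,3) by (simp add: LIMSEQ_power_zero tendsto_mult_left_zero)
  then have "d \<le> 0"
    using assms(4) by (intro LIMSEQ_le_const) auto
  with assms(1) show ?thesis by simp
qed

lemma finite_if_uniformly_discrete: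
  fixes T :: "'a::metric_space set"
  assumes "compact S" "T \<subseteq> S" "\<delta> > 0" "\<And>p q. p \<in> T \<Longrightarrow> q \<in> T \<Longrightarrow> dist p q < \<delta> \<Longrightarrow> p = q"
  shows "finite T"
proof (rule ccontr)
  assume "infinite T"
  then obtain x where "x islimpt T"
    using assms(1,2) unfolding compact_eq_Bolzano_Weierstrass by blast
  then obtain p where p: "p \<in> T" "p \<noteq> x" "dist p x < \<delta> / 2"
    using assms(3) unfolding islimpt_approachable by (meson half_gt_zero)
  with \<open>x islimpt T\<close> obtain q where q: "q \<in> T" "q \<noteq> x" "dist q x < min (\<delta> / 2) (dist p x)"
    unfolding islimpt_approachable by (metis assms(3) dist_pos_lt half_gt_zero min_less_iff_conj)
  have "dist p q \<le> dist p x + dist q x"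
    using dist_triangle3[of p q x] by (simp add: dist_commute)
  then have "dist p q < \<delta>"
    using p q by linarith
  then have "p = q" using assms(4) p q by blast
  then show False using q by simp
qed

lemma continuous_on_funpow:
  assumes "continuous_on S f" "f ` S \<subseteq> S"
  shows "continuous_on S (f ^^ n)"
proof (induction n)
  case (Suc n)
  have "(f ^^ n) ` S \<subseteq> S"
    using assms(2) by (induction n) auto
  with Suc show ?case
    using assms(1) by (auto intro: continuous_on_compose2)
qed simp

lemma uniformly_continuous_iterates:
  fixes f :: "'a::metric_space \<Rightarrow> 'a"
  assumes "compact S" "continuous_on S f" "f ` S \<subseteq> S" "e > 0"
  shows "\<exists>\<delta>>0. \<forall>x\<in>S. \<forall>y\<in>S. dist x y < \<delta> \<longrightarrow> (\<forall>i<n. dist ((f ^^ i) x) ((f ^^ i) y) < e)"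
proof (induction n)
  case 0
  show ?case by (intro exI[of _ 1]) simp
next
  case (Suc n)
  then obtain \<delta>1 where "\<delta>1 > 0"
    and \<delta>1: "\<forall>x\<in>S. \<forall>y\<in>S. dist x y < \<delta>1 \<longrightarrow> (\<forall>i<n. dist ((f ^^ i) x) ((f ^^ i) y) < e)"
    by blast
  have "uniformly_continuous_on S (f ^^ n)"
    using continuous_on_funpow[OF assms(2,3)] assms(1) by (rule compact_uniformly_continuous)
  then obtain \<delta>2 where "\<delta>2 > 0"
    and \<delta>2: "\<And>x y. x \<in> S \<Longrightarrow> y \<in> S \<Longrightarrow> dist y x < \<delta>2 \<Longrightarrow> dist ((f ^^ n) y) ((f ^^ n) x) < e"
    unfolding uniformly_continuous_on_def using assms(4) by metis
  show ?case
  proof (intro exI[of _ "min \<delta>1 \<delta>2"] conjI ballI impI allI)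
    show "min \<delta>1 \<delta>2 > 0"
      using \<open>\<delta>1 > 0\<close> \<open>\<delta>2 > 0\<close> by simp
    fix x y i
    assume "x \<in> S" "y \<in> S" "dist x y < min \<delta>1 \<delta>2" "i < Suc n"
    then show "dist ((f ^^ i) x) ((f ^^ i) y) < e"
      using \<delta>1 \<delta>2[of x y] by (auto simp: dist_commute less_Suc_eq)
  qed
qed

lemma dist_le_at_limit:
  assumes "continuous_on S f" "continuous_on S g" "s \<longlonglongrightarrow> l" "l \<in> S" "\<And>n. s n \<in> S"
    and "\<And>n. n \<ge> M \<Longrightarrow> dist (f (s n)) (g (s n)) \<le> c"
  shows "dist (f l) (g l) \<le> c"
proof -
  have "\<forall>\<^sub>F n in sequentially. s n \<in> S"
    using assms(5) by simp
  then have "(\<lambda>n. f (s n)) \<longlonglongrightarrow> f l" "(\<lambda>n. g (s n)) \<longlonglongrightarrow> g l"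
    using continuous_on_tendsto_compose assms(1-4) by blast+
  then have "(\<lambda>n. dist (f (s n)) (g (s n))) \<longlonglongrightarrow> dist (f l) (g l)"
    by (rule tendsto_dist)
  then show ?thesis
    by (rule LIMSEQ_le_const2) (use assms(6) in blast)
qed

lemma mixing_returns:
  fixes X :: "'a::metric_space set"
  assumes "mixing X f" "X \<noteq> {}" "0 < r"
  obtains N0 where "\<And>n. N0 \<le> n \<Longrightarrow> \<exists>y\<in>X. dist y ((f ^^ n) y) < r"
proof -
  obtain y0 where "y0 \<in> X"
    using assms(2) by blast
  define U where "U = X \<inter> ball y0 (r / 2)"
  have "openin (top_of_set X) U" "U \<noteq> {}"
    unfolding U_def using \<open>y0 \<in> X\<close> assms(3) by (auto simp: openin_open_Int)
  then obtain N0 where N0: "\<And>n. N0 \<le> n \<Longrightarrow> (f ^^ n) ` U \<inter> U \<noteq> {}"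
    using assms(1) unfolding mixing_def by blast
  have "\<exists>y\<in>X. dist y ((f ^^ n) y) < r" if n: "N0 \<le> n" for n
  proof -
    obtain y where "y \<in> U" "(f ^^ n) y \<in> U"
      using N0[OF n] by blast
    then have "y \<in> X" "dist y y0 < r / 2" "dist ((f ^^ n) y) y0 < r / 2"
      unfolding U_def by (auto simp: dist_commute)
    then show ?thesis
      using dist_triangle_half_l[of y y0 r "(f ^^ n) y"] by blast
  qed
  then show thesis
    using that by blast
qed

definition expansive_constant :: "'a::metric_space set \<Rightarrow> ('a \<Rightarrow> 'a) \<Rightarrow> ('a \<Rightarrow> 'a) \<Rightarrow> real \<Rightarrow> bool"
  where "expansive_constant X f g c \<longleftrightarrow>
    (\<forall>x\<in>X. \<forall>x'\<in>X. (\<forall>k. dist ((f ^^ k) x) ((f ^^ k) x') \<le> c \<and> dist ((g ^^ k) x) ((g ^^ k) x') \<le> c)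
      \<longrightarrow> x = x')"

locale smale =
  fixes X :: "'a::metric_space set" and phi psi :: "'a \<Rightarrow> 'a" and br :: "'a \<Rightarrow> 'a \<Rightarrow> 'a"
    and eps lam :: real
  assumes smale_space: "smale_space X phi psi br eps lam"
begin

lemma compact_X: "compact X"
  and infinite_X: "infinite X"
  and homeomorphism_phi: "homeomorphism X X phi psi"
  and eps_pos: "0 < eps"
  and lam_pos: "0 < lam"
  and lam_less_1: "lam < 1"
  using smale_space unfolding smale_space_def by auto

lemma bracket_in: "x \<in> X \<Longrightarrow> y \<in> X \<Longrightarrow> dist x y \<le> eps \<Longrightarrow> br x y \<in> X"
  and bracket_continuous: "continuous_on {(x, y). x \<in> X \<and> y \<in> X \<and> dist x y \<le> eps} (\<lambda>(x, y). br x y)"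
  and bracket_same: "x \<in> X \<Longrightarrow> br x x = x"
  using smale_space unfolding smale_space_def by (elim conjE; simp)+

lemma bracket_bracket_right:
  "x \<in> X \<Longrightarrow> y \<in> X \<Longrightarrow> z \<in> X \<Longrightarrow> dist y z \<le> eps \<Longrightarrow> dist x (br y z) \<le> eps \<Longrightarrow> dist x z \<le> eps
    \<Longrightarrow> br x (br y z) = br x z"
  and bracket_bracket_left:
  "x \<in> X \<Longrightarrow> y \<in> X \<Longrightarrow> z \<in> X \<Longrightarrow> dist x y \<le> eps \<Longrightarrow> dist (br x y) z \<le> eps \<Longrightarrow> dist x z \<le> eps
    \<Longrightarrow> br (br x y) z = br x z"
  and phi_bracket:
  "x \<in> X \<Longrightarrow> y \<in> X \<Longrightarrow> dist x y \<le> eps \<Longrightarrow> dist (phi x) (phi y) \<le> eps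
    \<Longrightarrow> phi (br x y) = br (phi x) (phi y)"
  and phi_contracts_stable:
  "x \<in> X \<Longrightarrow> y \<in> X \<Longrightarrow> dist x y \<le> eps \<Longrightarrow> br x y = y \<Longrightarrow> dist (phi x) (phi y) \<le> lam * dist x y"
  and psi_contracts_unstable:
  "x \<in> X \<Longrightarrow> y \<in> X \<Longrightarrow> dist x y \<le> eps \<Longrightarrow> br x y = x \<Longrightarrow> dist (psi x) (psi y) \<le> lam * dist x y"
  using smale_space unfolding smale_space_def by blast+

lemma homeomorphism_iter: "homeomorphism X X (phi ^^ n) (psi ^^ n)"
  using homeomorphism_funpow[OF homeomorphism_phi] .

lemma phi_in: "x \<in> X \<Longrightarrow> phi x \<in> X"
  and psi_in: "x \<in> X \<Longrightarrow> psi x \<in> X"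
  and psi_phi: "x \<in> X \<Longrightarrow> psi (phi x) = x"
  and phi_psi: "x \<in> X \<Longrightarrow> phi (psi x) = x"
  and continuous_on_phi: "continuous_on X phi"
  using homeomorphism_phi unfolding homeomorphism_def by auto

lemma phi_iter_in: "x \<in> X \<Longrightarrow> (phi ^^ n) x \<in> X"
  and psi_iter_in: "x \<in> X \<Longrightarrow> (psi ^^ n) x \<in> X"
  and psi_phi_iter: "x \<in> X \<Longrightarrow> (psi ^^ n) ((phi ^^ n) x) = x"
  and phi_psi_iter: "x \<in> X \<Longrightarrow> (phi ^^ n) ((psi ^^ n) x) = x"
  and continuous_on_phi_iter: "continuous_on X (phi ^^ n)"
  and continuous_on_psi_iter: "continuous_on X (psi ^^ n)"
  using homeomorphism_iter[of n] unfolding homeomorphism_def by auto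

lemma psi_phi_iter_le:
  assumes "x \<in> X" "i \<le> k"
  shows "(psi ^^ i) ((phi ^^ k) x) = (phi ^^ (k - i)) x"
proof -
  have "(phi ^^ k) x = (phi ^^ i) ((phi ^^ (k - i)) x)"
    using assms(2) by (metis add_diff_inverse_nat comp_apply funpow_add not_less)
  then show ?thesis using psi_phi_iter phi_iter_in assms(1) by simp
qed
lemma bracket_close:
  assumes "e > 0"
  obtains \<eta> where "0 < \<eta>" "\<eta> \<le> eps"
    "\<And>x y. x \<in> X \<Longrightarrow> y \<in> X \<Longrightarrow> dist x y \<le> \<eta> \<Longrightarrow> dist (br x y) x \<le> e \<and> dist (br x y) y \<le> e"
proof -
  define D where "D = {(x, y). x \<in> X \<and> y \<in> X \<and> dist x y \<le> eps}"
  have "D = (X \<times> X) \<inter> {p. dist (fst p) (snd p) \<le> eps}"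
    unfolding D_def by auto
  moreover have "closed {p. dist (fst p) (snd p) \<le> eps}"
    by (intro closed_Collect_le continuous_intros)
  ultimately have "compact D"
    using compact_X by (metis compact_Int_closed compact_Times)
  then have "uniformly_continuous_on D (\<lambda>(x, y). br x y)"
    using compact_uniformly_continuous bracket_continuous unfolding D_def by blast
  then obtain d where "d > 0" and d: "\<And>p p'. p \<in> D \<Longrightarrow> p' \<in> D \<Longrightarrow> dist p' p < d
      \<Longrightarrow> dist ((\<lambda>(x, y). br x y) p') ((\<lambda>(x, y). br x y) p) < e"
    using assms unfolding uniformly_continuous_on_def by metis
  \<comment> \<open>uniform continuity at the diagonal, where \<open>br x x = x\<close>\<close>
  have "dist (br x y) x \<le> e \<and> dist (br x y) y \<le> e"
    if "x \<in> X" "y \<in> X" "dist x y \<le> min (d / 2) eps" for x y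
  proof -
    have D: "(x, y) \<in> D" "(x, x) \<in> D" "(y, y) \<in> D"
      using that eps_pos unfolding D_def by auto
    have "dist (x, y) (x, x) < d" "dist (x, y) (y, y) < d"
      using that \<open>d > 0\<close> by (simp_all add: dist_Pair_Pair dist_commute)
    then show ?thesis
      using d[OF D(2) D(1)] d[OF D(3) D(1)] bracket_same that by fastforce
  qed
  then show thesis
    using that[of "min (d / 2) eps"] \<open>d > 0\<close> eps_pos by auto
qed

lemma bracket_stable:
  "x \<in> X \<Longrightarrow> y \<in> X \<Longrightarrow> dist x y \<le> eps \<Longrightarrow> dist x (br x y) \<le> eps \<Longrightarrow> br x (br x y) = br x y"
  using bracket_bracket_right[of x x y] by simp

lemma bracket_unstable:
  "x \<in> X \<Longrightarrow> y \<in> X \<Longrightarrow> dist x y \<le> eps \<Longrightarrow> dist (br x y) y \<le> eps \<Longrightarrow> br (br x y) y = br x y"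
  using bracket_bracket_left[of x y y] by simp

lemma stable_trans:
  assumes "x \<in> X" "y \<in> X" "z \<in> X" "br x y = y" "br y z = z"
    and "dist x y \<le> eps" "dist y z \<le> eps" "dist x z \<le> eps"
  shows "br x z = z"
  using bracket_bracket_left[of x y z] assms by simp

lemma psi_bracket:
  assumes "x \<in> X" "y \<in> X" "dist x y \<le> eps" "dist (psi x) (psi y) \<le> eps"
  shows "psi (br x y) = br (psi x) (psi y)"
proof -
  have "phi (br (psi x) (psi y)) = br x y"
    using phi_bracket[of "psi x" "psi y"] assms psi_in phi_psi by simp
  then show ?thesis
    using psi_phi bracket_in assms psi_in by metis
qed

lemma smale_reverse: "smale X psi phi (\<lambda>x y. br y x) eps lam"
proof -
  have "continuous_on {(x, y). x \<in> X \<and> y \<in> X \<and> dist x y \<le> eps} ((\<lambda>(x, y). br x y) \<circ> prod.swap)"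
    by (intro continuous_on_compose continuous_on_swap continuous_on_subset[OF bracket_continuous])
      (auto simp: dist_commute)
  then have "continuous_on {(x, y). x \<in> X \<and> y \<in> X \<and> dist x y \<le> eps} (\<lambda>(x, y). br y x)"
    by (simp add: comp_def case_prod_unfold)
  moreover have "dist (psi x) (psi y) \<le> lam * dist x y"
    if "x \<in> X" "y \<in> X" "dist x y \<le> eps" "br y x = y" for x y
    using psi_contracts_unstable[of y x] that by (simp add: dist_commute)
  moreover have "dist (phi x) (phi y) \<le> lam * dist x y"
    if "x \<in> X" "y \<in> X" "dist x y \<le> eps" "br y x = x" for x y
    using phi_contracts_stable[of y x] that by (simp add: dist_commute)
  ultimately show ?thesis
    unfolding smale_def smale_space_def
    using compact_X infinite_X homeomorphism_symD[OF homeomorphism_phi] eps_pos lam_pos lam_less_1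
      bracket_in bracket_same bracket_bracket_left bracket_bracket_right psi_bracket
    by (simp add: dist_commute)
qed

lemma phi_psi_iter_le:
  "x \<in> X \<Longrightarrow> i \<le> k \<Longrightarrow> (phi ^^ i) ((psi ^^ k) x) = (psi ^^ (k - i)) x"
  using smale.psi_phi_iter_le[OF smale_reverse] .

lemma phi_iter_contracts_stable:
  assumes "x \<in> X" "y \<in> X" "dist x y \<le> eps" "br x y = y"
  shows "dist ((phi ^^ k) x) ((phi ^^ k) y) \<le> lam ^ k * dist x y
    \<and> br ((phi ^^ k) x) ((phi ^^ k) y) = (phi ^^ k) y"
proof (induction k)
  case 0
  then show ?case using assms by simp
next
  case (Suc k)
  define x' y' where "x' = (phi ^^ k) x" and "y' = (phi ^^ k) y"
  have in_X: "x' \<in> X" "y' \<in> X"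
    unfolding x'_def y'_def using assms phi_iter_in by auto
  have "lam ^ k * dist x y \<le> dist x y"
    using lam_pos lam_less_1 by (simp add: mult_left_le_one_le power_le_one)
  with Suc assms have close: "dist x' y' \<le> eps" and stable: "br x' y' = y'"
    unfolding x'_def y'_def by auto
  have step: "dist (phi x') (phi y') \<le> lam * dist x' y'"
    using phi_contracts_stable in_X close stable by blast
  also have "\<dots> \<le> lam * (lam ^ k * dist x y)"
    using Suc lam_pos unfolding x'_def y'_def by simp
  finally have "dist (phi x') (phi y') \<le> lam ^ Suc k * dist x y"
    by simp
  moreover have "lam * dist x' y' \<le> dist x' y'"
    using lam_less_1 by (simp add: mult_left_le_one_le lam_pos less_imp_le)
  then have "br (phi x') (phi y') = phi y'"
    using phi_bracket[OF in_X close] step close stable by simp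
  ultimately show ?case
    unfolding x'_def y'_def by simp
qed

lemma phi_iter_stable_nonexpanding:
  assumes "x \<in> X" "y \<in> X" "dist x y \<le> eps" "br x y = y"
  shows "dist ((phi ^^ k) x) ((phi ^^ k) y) \<le> dist x y"
proof -
  have "lam ^ k * dist x y \<le> dist x y"
    using lam_pos lam_less_1 by (simp add: mult_left_le_one_le power_le_one)
  then show ?thesis
    using phi_iter_contracts_stable[OF assms, of k] by linarith
qed

lemma psi_iter_contracts_unstable:
  assumes "x \<in> X" "y \<in> X" "dist x y \<le> eps" "br x y = x"
  shows "dist ((psi ^^ k) x) ((psi ^^ k) y) \<le> lam ^ k * dist x y
    \<and> br ((psi ^^ k) x) ((psi ^^ k) y) = (psi ^^ k) x"
  using smale.phi_iter_contracts_stable[OF smale_reverse, of y x k] assms by (simp add: dist_commute)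

lemma phi_iter_bracket:
  assumes "x \<in> X" "y \<in> X" "\<And>j. j \<le> k \<Longrightarrow> dist ((phi ^^ j) x) ((phi ^^ j) y) \<le> eps"
  shows "(phi ^^ k) (br x y) = br ((phi ^^ k) x) ((phi ^^ k) y)"
  using assms(3)
proof (induction k)
  case (Suc k)
  then show ?case
    using phi_bracket[of "(phi ^^ k) x" "(phi ^^ k) y"] Suc.prems[of k] Suc.prems[of "Suc k"]
      phi_iter_in assms(1,2) by simp
qed simp

lemma psi_iter_bracket:
  assumes "x \<in> X" "y \<in> X" "\<And>j. j \<le> k \<Longrightarrow> dist ((psi ^^ j) x) ((psi ^^ j) y) \<le> eps"
  shows "(psi ^^ k) (br x y) = br ((psi ^^ k) x) ((psi ^^ k) y)"
  using smale.phi_iter_bracket[OF smale_reverse, of y x k] assms by (simp add: dist_commute)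

lemma dist_bracket_le_if_psi_orbits_close:
  assumes "c \<le> eps"
    and c: "\<And>x y. x \<in> X \<Longrightarrow> y \<in> X \<Longrightarrow> dist x y \<le> c \<Longrightarrow> dist (br x y) x \<le> eps \<and> dist (br x y) y \<le> eps"
    and "x \<in> X" "x' \<in> X" "\<And>k. dist ((psi ^^ k) x) ((psi ^^ k) x') \<le> c"
  shows "dist x (br x x') \<le> lam ^ k * eps"
proof -
  define a a' where "a = (psi ^^ k) x" and "a' = (psi ^^ k) x'"
  have in_X: "a \<in> X" "a' \<in> X"
    unfolding a_def a'_def using psi_iter_in assms(3,4) by auto
  have close: "dist a a' \<le> c"
    unfolding a_def a'_def using assms(5) .
  have bracket_close_a: "dist a (br a a') \<le> eps"
    using c[OF in_X close] by (simp add: dist_commute)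
  have "br a a' \<in> X" "br a (br a a') = br a a'"
    using bracket_in bracket_stable in_X close \<open>c \<le> eps\<close> bracket_close_a by auto
  then have "dist ((phi ^^ k) a) ((phi ^^ k) (br a a')) \<le> lam ^ k * dist a (br a a')"
    using phi_iter_contracts_stable in_X bracket_close_a by blast
  also have "\<dots> \<le> lam ^ k * eps"
    using bracket_close_a lam_pos by (simp add: mult_left_mono)
  finally have contracted: "dist ((phi ^^ k) a) ((phi ^^ k) (br a a')) \<le> lam ^ k * eps" .
  have "(psi ^^ k) (br x x') = br a a'"
    unfolding a_def a'_def using psi_iter_bracket assms order_trans by blast
  moreover have "dist x x' \<le> eps"
    using assms(5)[of 0] \<open>c \<le> eps\<close> by simp
  ultimately have "(phi ^^ k) (br a a') = br x x'"
    using phi_psi_iter bracket_in assms(3,4) by metis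
  moreover have "(phi ^^ k) a = x"
    unfolding a_def using phi_psi_iter assms(3) .
  ultimately show ?thesis using contracted by simp
qed

lemma expansive:
  obtains c where "0 < c" "c \<le> eps" "expansive_constant X phi psi c"
proof -
  obtain c where "0 < c" "c \<le> eps"
    and c: "\<And>x y. x \<in> X \<Longrightarrow> y \<in> X \<Longrightarrow> dist x y \<le> c \<Longrightarrow> dist (br x y) x \<le> eps \<and> dist (br x y) y \<le> eps"
    using bracket_close[OF eps_pos] by blast
  have "x = x'"
    if "x \<in> X" "x' \<in> X" and orbits_close:
      "\<forall>k. dist ((phi ^^ k) x) ((phi ^^ k) x') \<le> c \<and> dist ((psi ^^ k) x) ((psi ^^ k) x') \<le> c"
    for x x'
  proof -
    \<comment> \<open>\<open>br x x'\<close> is stably related to \<open>x\<close> and unstably to \<open>x'\<close>, so it coincides with both\<close>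
    have "dist x (br x x') \<le> lam ^ k * eps" for k
      using dist_bracket_le_if_psi_orbits_close[OF \<open>c \<le> eps\<close> c that(1,2)] orbits_close by blast
    moreover have "dist x' (br x x') \<le> lam ^ k * eps" for k
      using smale.dist_bracket_le_if_psi_orbits_close[OF smale_reverse \<open>c \<le> eps\<close> _ that(2,1)]
        c orbits_close by (simp add: dist_commute)
    ultimately have "dist x (br x x') = 0" "dist x' (br x x') = 0"
      using nonneg_le_geometric_imp_zero lam_pos lam_less_1 by (metis less_imp_le zero_le_dist)+
    then show ?thesis by simp
  qed
  then show thesis
    using that \<open>0 < c\<close> \<open>c \<le> eps\<close> unfolding expansive_constant_def by blast
qed

lemma finite_fixpoints_iter:
  assumes "N \<ge> 1"
  shows "finite {x \<in> X. (phi ^^ N) x = x}"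
proof -
  obtain c where "0 < c" and expansive: "expansive_constant X phi psi c"
    using expansive by blast
  obtain \<delta> where "\<delta> > 0"
    and \<delta>: "\<forall>x\<in>X. \<forall>y\<in>X. dist x y < \<delta> \<longrightarrow> (\<forall>i<N. dist ((phi ^^ i) x) ((phi ^^ i) y) < c)"
    using uniformly_continuous_iterates[OF compact_X continuous_on_phi _ \<open>0 < c\<close>] phi_in by blast
  show ?thesis
  proof (rule finite_if_uniformly_discrete[OF compact_X _ \<open>\<delta> > 0\<close>])
    fix p q
    assume p: "p \<in> {x \<in> X. (phi ^^ N) x = x}" and q: "q \<in> {x \<in> X. (phi ^^ N) x = x}"
      and "dist p q < \<delta>"
    \<comment> \<open>by periodicity the whole orbits are governed by the first \<open>N\<close> iterates\<close>
    have phi_close: "dist ((phi ^^ k) p) ((phi ^^ k) q) \<le> c" for k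
    proof -
      have "(phi ^^ (k mod N)) p = (phi ^^ k) p" "(phi ^^ (k mod N)) q = (phi ^^ k) q"
        using funpow_mod_eq p q by auto
      moreover have "k mod N < N"
        using assms by simp
      ultimately show ?thesis
        using \<delta> \<open>dist p q < \<delta>\<close> p q by (metis (no_types, lifting) less_imp_le mem_Collect_eq)
    qed
    have "(psi ^^ k) x = (phi ^^ (N * k - k)) x" if "x \<in> X" "(phi ^^ N) x = x" for x k
    proof -
      have "(phi ^^ (N * k)) x = x"
        using funpow_mod_eq[where f = phi and n = N and m = "N * k"] that(2) by simp
      then show ?thesis
        using psi_phi_iter_le[OF that(1), of k "N * k"] assms by simp
    qed
    then have "dist ((psi ^^ k) p) ((psi ^^ k) q) \<le> c" for k
      using phi_close p q by simp
    with phi_close show "p = q"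
      using expansive p q unfolding expansive_constant_def by blast
  qed auto
qed

lemma act_commutes_phi_iter:
  assumes "smale_action G X phi act" "g \<in> carrier G" "x \<in> X"
  shows "act g ((phi ^^ k) x) = (phi ^^ k) (act g x)"
proof (induction k)
  case (Suc k)
  then show ?case
    using assms phi_iter_in unfolding smale_action_def by simp
qed simp

lemma act_preserves_fixpoints_iter:
  assumes "smale_action G X phi act" "g \<in> carrier G" "p \<in> X" "(phi ^^ N) p = p"
  shows "act g p \<in> X \<and> (phi ^^ N) (act g p) = act g p"
proof
  show "act g p \<in> X"
    using assms(1) group_action.element_image[OF _ assms(2,3) refl] unfolding smale_action_def by blast
  show "(phi ^^ N) (act g p) = act g p"
    using act_commutes_phi_iter[OF assms(1-3), of N] assms(4) by simp
qed

lemma phi_image_fixpoints_iter: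
  "phi ` {x \<in> X. (phi ^^ N) x = x} = {x \<in> X. (phi ^^ N) x = x}"
proof (intro equalityI subsetI)
  fix z
  assume "z \<in> phi ` {x \<in> X. (phi ^^ N) x = x}"
  then obtain x where "x \<in> X" "(phi ^^ N) x = x" "z = phi x"
    by blast
  then show "z \<in> {x \<in> X. (phi ^^ N) x = x}"
    using phi_in funpow_swap1[of phi N x] by simp
next
  fix x
  assume x: "x \<in> {x \<in> X. (phi ^^ N) x = x}"
  then have "phi ((phi ^^ N) (psi x)) = x"
    using phi_psi funpow_swap1[of phi N "psi x"] by simp
  moreover have "psi (phi ((phi ^^ N) (psi x))) = (phi ^^ N) (psi x)"
    using psi_phi phi_iter_in psi_in x by simp
  ultimately have "(phi ^^ N) (psi x) = psi x"
    by simp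
  then have "psi x \<in> {x \<in> X. (phi ^^ N) x = x}"
    using psi_in x by simp
  then show "x \<in> phi ` {x \<in> X. (phi ^^ N) x = x}"
    using phi_psi x by force
qed

lemma fixpoint_if_almost_periodic_orbits:
  assumes "expansive_constant X phi psi c"
    and "\<And>n. \<exists>v\<in>X. \<forall>a\<le>2 * n. dist ((phi ^^ a) v) ((phi ^^ (a + N)) v) \<le> c"
  shows "\<exists>x\<in>X. (phi ^^ N) x = x"
proof -
  obtain v where v_in: "\<And>n. v n \<in> X"
    and v: "\<And>n a. a \<le> 2 * n \<Longrightarrow> dist ((phi ^^ a) (v n)) ((phi ^^ (a + N)) (v n)) \<le> c"
    using assms(2) by metis
  \<comment> \<open>the orbit of \<open>w n\<close> is almost \<open>N\<close>-periodic on the time window \<open>[-n, n]\<close>\<close>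
  define w where "w n = (phi ^^ n) (v n)" for n
  have w_in: "w n \<in> X" for n
    unfolding w_def using phi_iter_in v_in .
  then obtain l r where "l \<in> X" "strict_mono r" and lim: "(w \<circ> r) \<longlonglongrightarrow> l"
    using compact_X unfolding compact_def by metis
  have "dist ((phi ^^ k) l) ((phi ^^ k) ((phi ^^ N) l)) \<le> c
      \<and> dist ((psi ^^ k) l) ((psi ^^ k) ((phi ^^ N) l)) \<le> c" for k
  proof
    have late: "k \<le> r n" if "k \<le> n" for n
      using seq_suble[OF \<open>strict_mono r\<close>, of n] that by simp
    have "dist ((phi ^^ k) (w n)) ((phi ^^ (k + N)) (w n)) \<le> c" if "k \<le> n" for n
      using v[of "k + n" n] that unfolding w_def by (simp add: funpow_add add.commute add.left_commute)
    then have "dist ((phi ^^ k) l) ((phi ^^ (k + N)) l) \<le> c"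
      using dist_le_at_limit[where f = "phi ^^ k" and g = "phi ^^ (k + N)" and M = k,
          OF continuous_on_phi_iter continuous_on_phi_iter lim \<open>l \<in> X\<close>] w_in late by simp
    then show "dist ((phi ^^ k) l) ((phi ^^ k) ((phi ^^ N) l)) \<le> c"
      by (simp add: funpow_add)
    have "dist ((psi ^^ k) (w n)) ((psi ^^ k) ((phi ^^ N) (w n))) \<le> c" if "k \<le> n" for n
    proof -
      have "(psi ^^ k) (w n) = (phi ^^ (n - k)) (v n)"
        unfolding w_def using psi_phi_iter_le v_in that by blast
      moreover have "(psi ^^ k) ((phi ^^ N) (w n)) = (phi ^^ (n - k + N)) (v n)"
      proof -
        have "(phi ^^ N) (w n) = (phi ^^ (N + n)) (v n)"
          unfolding w_def by (simp add: funpow_add)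
        moreover have "N + n - k = n - k + N"
          using that by simp
        ultimately show ?thesis
          using psi_phi_iter_le[OF v_in, of k "N + n"] that by simp
      qed
      ultimately show ?thesis
        using v[of "n - k" n] by simp
    qed
    moreover have "continuous_on X (\<lambda>x. (psi ^^ k) ((phi ^^ N) x))"
      using continuous_on_compose2[OF continuous_on_psi_iter continuous_on_phi_iter] phi_iter_in by blast
    ultimately show "dist ((psi ^^ k) l) ((psi ^^ k) ((phi ^^ N) l)) \<le> c"
      using dist_le_at_limit[where f = "psi ^^ k" and g = "\<lambda>x. (psi ^^ k) ((phi ^^ N) x)" and M = k,
          OF continuous_on_psi_iter _ lim \<open>l \<in> X\<close>] w_in late by simp
  qed
  then have "(phi ^^ N) l = l"
    using assms(1) \<open>l \<in> X\<close> phi_iter_in unfolding expansive_constant_def by metis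
  with \<open>l \<in> X\<close> show ?thesis by blast
qed

end

locale closing = smale +
  fixes \<gamma> \<eta> :: real and N :: nat and y :: "'a::metric_space"
  assumes gamma_pos: "0 < \<gamma>" and two_gamma_le_eps: "2 * \<gamma> \<le> eps"
    and eta_le_eps: "\<eta> \<le> eps"
    and bracket_eta: "\<And>x x'. x \<in> X \<Longrightarrow> x' \<in> X \<Longrightarrow> dist x x' \<le> \<eta>
      \<Longrightarrow> dist (br x x') x \<le> \<gamma> \<and> dist (br x x') x' \<le> \<gamma>"
    and y_in: "y \<in> X"
    and N_pos: "1 \<le> N"
    and y_returns: "dist y ((phi ^^ N) y) \<le> \<eta> / 2"
    and lam_N_half: "lam ^ N \<le> 1 / 2"
    and lam_N_gamma: "lam ^ N * \<gamma> \<le> \<eta> / 4"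
begin

primrec shadowing_point :: "nat \<Rightarrow> 'a" where
  "shadowing_point 0 = y"
| "shadowing_point (Suc m) = (psi ^^ N) (br (shadowing_point m) ((phi ^^ N) y))"

lemma gamma_le_eps: "\<gamma> \<le> eps"
  using gamma_pos two_gamma_le_eps by linarith

lemma eta_nonneg: "0 \<le> \<eta>"
  using y_returns zero_le_dist[of y "(phi ^^ N) y"] by linarith

lemma bracket_with_return:
  assumes "v \<in> X" "dist v y \<le> \<eta> / 4"
  defines "e \<equiv> br v ((phi ^^ N) y)"
  shows "e \<in> X" "dist v e \<le> \<gamma>" "dist e ((phi ^^ N) y) \<le> \<gamma>" "br v e = e" "br e ((phi ^^ N) y) = e"
proof -
  have "dist v ((phi ^^ N) y) \<le> dist v y + dist y ((phi ^^ N) y)"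
    by (rule dist_triangle)
  then have close: "dist v ((phi ^^ N) y) \<le> \<eta>"
    using assms(2) y_returns eta_nonneg by linarith
  have in_X: "(phi ^^ N) y \<in> X"
    using phi_iter_in y_in .
  show "dist v e \<le> \<gamma>" "dist e ((phi ^^ N) y) \<le> \<gamma>"
    using bracket_eta[OF assms(1) in_X close] unfolding e_def by (auto simp: dist_commute)
  then show "e \<in> X" "br v e = e" "br e ((phi ^^ N) y) = e"
    using bracket_in bracket_stable bracket_unstable assms(1) in_X close eta_le_eps gamma_le_eps
    unfolding e_def by auto
qed

lemma shadowing_point_near:
  "shadowing_point m \<in> X \<and> dist (shadowing_point m) y \<le> \<eta> / 4
    \<and> (\<forall>t\<le>N. dist ((phi ^^ t) (shadowing_point m)) ((phi ^^ t) y) \<le> \<gamma>)"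
proof (induction m)
  case 0
  show ?case
    using y_in eta_nonneg gamma_pos by simp
next
  case (Suc m)
  define e where "e = br (shadowing_point m) ((phi ^^ N) y)"
  note e = bracket_with_return[of "shadowing_point m", folded e_def]
  have unstable: "dist ((psi ^^ k) e) ((psi ^^ k) ((phi ^^ N) y)) \<le> lam ^ k * \<gamma>" for k
  proof -
    have "dist ((psi ^^ k) e) ((psi ^^ k) ((phi ^^ N) y)) \<le> lam ^ k * dist e ((phi ^^ N) y)"
      using psi_iter_contracts_unstable[of e "(phi ^^ N) y" k] e Suc phi_iter_in y_in gamma_le_eps by auto
    also have "\<dots> \<le> lam ^ k * \<gamma>"
      using e Suc lam_pos by (simp add: mult_left_mono)
    finally show ?thesis .
  qed
  have "dist (shadowing_point (Suc m)) y \<le> \<eta> / 4"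
    using unstable[of N] psi_phi_iter[OF y_in] lam_N_gamma unfolding e_def by simp
  moreover have "dist ((phi ^^ t) (shadowing_point (Suc m))) ((phi ^^ t) y) \<le> \<gamma>" if "t \<le> N" for t
  proof -
    have "lam ^ (N - t) * \<gamma> \<le> \<gamma>"
      using gamma_pos lam_pos lam_less_1 by (simp add: mult_left_le_one_le power_le_one)
    then show ?thesis
      using unstable[of "N - t"] phi_psi_iter_le[of e t N] psi_phi_iter_le[OF y_in, of "N - t" N] e Suc that
      unfolding e_def by simp
  qed
  ultimately show ?case
    using psi_iter_in e Suc unfolding e_def by simp
qed

lemma phi_N_shadowing_point_Suc:
  "(phi ^^ N) (shadowing_point (Suc m)) = br (shadowing_point m) ((phi ^^ N) y)"
  using phi_psi_iter bracket_with_return(1) shadowing_point_near by simp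

lemma shadowing_point_stable:
  assumes "j \<le> m"
  shows "(phi ^^ (j * N)) (shadowing_point m) \<in> X
    \<and> br (shadowing_point (m - j)) ((phi ^^ (j * N)) (shadowing_point m)) = (phi ^^ (j * N)) (shadowing_point m)
    \<and> dist (shadowing_point (m - j)) ((phi ^^ (j * N)) (shadowing_point m)) \<le> 2 * \<gamma>"
  using assms
proof (induction j)
  case 0
  then show ?case
    using shadowing_point_near bracket_same gamma_pos by simp
next
  case (Suc j)
  define a b where "a = shadowing_point (m - j)" and "b = (phi ^^ (j * N)) (shadowing_point m)"
  define u e where "u = shadowing_point (m - Suc j)" and "e = br u ((phi ^^ N) y)"
  have ab: "a \<in> X" "b \<in> X" "br a b = b" "dist a b \<le> 2 * \<gamma>"
    using Suc shadowing_point_near unfolding a_def b_def by auto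
  have "lam ^ N * dist a b \<le> lam ^ N * (2 * \<gamma>)"
    using ab lam_pos by (simp add: mult_left_mono)
  also have "\<dots> \<le> 1 / 2 * (2 * \<gamma>)"
    using lam_N_half gamma_pos by (intro mult_right_mono) auto
  finally have "lam ^ N * dist a b \<le> \<gamma>"
    by simp
  moreover have "(phi ^^ N) a = e"
    using phi_N_shadowing_point_Suc Suc.prems unfolding a_def e_def u_def
    by (metis Suc_diff_Suc Suc_le_lessD)
  ultimately have "br e ((phi ^^ N) b) = (phi ^^ N) b" "dist e ((phi ^^ N) b) \<le> \<gamma>"
    using phi_iter_contracts_stable[of a b N] ab two_gamma_le_eps by auto
  moreover have "e \<in> X" "br u e = e" "dist u e \<le> \<gamma>"
    using bracket_with_return shadowing_point_near unfolding e_def u_def by auto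
  moreover have "(phi ^^ N) b \<in> X" "u \<in> X"
    using phi_iter_in ab shadowing_point_near unfolding u_def by auto
  ultimately have "br u ((phi ^^ N) b) = (phi ^^ N) b" "dist u ((phi ^^ N) b) \<le> 2 * \<gamma>"
    using stable_trans[of u e "(phi ^^ N) b"] dist_triangle[of u "(phi ^^ N) b" e] gamma_le_eps
      two_gamma_le_eps by auto
  moreover have "(phi ^^ N) b = (phi ^^ (Suc j * N)) (shadowing_point m)"
    unfolding b_def by (simp add: funpow_add)
  ultimately show ?case
    using \<open>(phi ^^ N) b \<in> X\<close> unfolding u_def by simp
qed

lemma shadowing_point_shadows:
  assumes "a \<le> m * N"
  shows "dist ((phi ^^ a) (shadowing_point m)) ((phi ^^ (a mod N)) y) \<le> 3 * \<gamma>"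
proof -
  define j t where "j = a div N" and "t = a mod N"
  define u b where "u = shadowing_point (m - j)" and "b = (phi ^^ (j * N)) (shadowing_point m)"
  have "j \<le> m"
    unfolding j_def using assms N_pos div_le_mono[OF assms, of N] by simp
  then have "b \<in> X" "br u b = b" "dist u b \<le> 2 * \<gamma>"
    using shadowing_point_stable unfolding u_def b_def by auto
  then have "dist ((phi ^^ t) u) ((phi ^^ t) b) \<le> 2 * \<gamma>"
    using phi_iter_stable_nonexpanding[of u b t] shadowing_point_near two_gamma_le_eps
    unfolding u_def by fastforce
  moreover have "dist ((phi ^^ t) u) ((phi ^^ t) y) \<le> \<gamma>"
    unfolding t_def u_def using shadowing_point_near N_pos by simp
  moreover have "(phi ^^ a) (shadowing_point m) = (phi ^^ t) b"
    unfolding t_def j_def b_def by (metis comp_apply funpow_add mod_div_mult_eq)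
  ultimately show ?thesis
    using dist_triangle3[of "(phi ^^ t) b" "(phi ^^ t) y" "(phi ^^ t) u"] unfolding t_def by simp
qed

lemma shadowing_point_almost_periodic:
  assumes "a + N \<le> m * N"
  shows "dist ((phi ^^ a) (shadowing_point m)) ((phi ^^ (a + N)) (shadowing_point m)) \<le> 6 * \<gamma>"
proof -
  have "dist ((phi ^^ a) (shadowing_point m)) ((phi ^^ (a mod N)) y) \<le> 3 * \<gamma>"
    using shadowing_point_shadows assms by simp
  moreover have "dist ((phi ^^ (a + N)) (shadowing_point m)) ((phi ^^ (a mod N)) y) \<le> 3 * \<gamma>"
    using shadowing_point_shadows[of "a + N" m] assms by simp
  ultimately show ?thesis
    using dist_triangle2[of "(phi ^^ a) (shadowing_point m)" "(phi ^^ (a + N)) (shadowing_point m)"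
        "(phi ^^ (a mod N)) y"] by linarith
qed

lemma exists_fixpoint_iter:
  assumes "expansive_constant X phi psi (6 * \<gamma>)"
  shows "\<exists>x\<in>X. (phi ^^ N) x = x"
proof (rule fixpoint_if_almost_periodic_orbits[OF assms])
  fix n
  show "\<exists>v\<in>X. \<forall>a\<le>2 * n. dist ((phi ^^ a) v) ((phi ^^ (a + N)) v) \<le> 6 * \<gamma>"
  proof (intro bexI allI impI)
    show "shadowing_point (2 * n + 1) \<in> X"
      using shadowing_point_near by blast
    fix a
    assume "a \<le> 2 * n"
    then have "a + N \<le> (2 * n + 1) * N"
      using N_pos by (simp add: add_mult_distrib order_trans[OF _ mult_le_mono2[OF N_pos]])
    then show "dist ((phi ^^ a) (shadowing_point (2 * n + 1))) ((phi ^^ (a + N)) (shadowing_point (2 * n + 1)))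
        \<le> 6 * \<gamma>"
      by (rule shadowing_point_almost_periodic)
  qed
qed

end

context smale
begin

lemma exists_periodic_point:
  assumes "mixing X phi"
  obtains x N where "x \<in> X" "1 \<le> N" "(phi ^^ N) x = x"
proof -
  obtain c where "0 < c" "c \<le> eps" and expansive: "expansive_constant X phi psi c"
    using expansive by blast
  define \<gamma> where "\<gamma> = c / 6"
  have "0 < \<gamma>"
    unfolding \<gamma>_def using \<open>0 < c\<close> by simp
  then obtain \<eta> where "0 < \<eta>" "\<eta> \<le> eps" and bracket_eta:
      "\<And>x x'. x \<in> X \<Longrightarrow> x' \<in> X \<Longrightarrow> dist x x' \<le> \<eta> \<Longrightarrow> dist (br x x') x \<le> \<gamma> \<and> dist (br x x') x' \<le> \<gamma>"
    using bracket_close by blast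
  obtain K where K: "lam ^ K < min (1 / 2) (\<eta> / (4 * \<gamma>))"
    using real_arch_pow_inv[of "min (1 / 2) (\<eta> / (4 * \<gamma>))" lam] \<open>0 < \<eta>\<close> \<open>0 < \<gamma>\<close> lam_less_1 by auto
  have "X \<noteq> {}"
    using infinite_X by auto
  then obtain N0 where N0: "\<And>n. N0 \<le> n \<Longrightarrow> \<exists>y\<in>X. dist y ((phi ^^ n) y) < \<eta> / 2"
    using mixing_returns[OF assms _ half_gt_zero[OF \<open>0 < \<eta>\<close>]] by blast
  define N where "N = max N0 (max K 1)"
  then have "N0 \<le> N"
    by simp
  then obtain y where "y \<in> X" and "dist y ((phi ^^ N) y) < \<eta> / 2"
    using N0 by blast
  then have y_returns: "dist y ((phi ^^ N) y) \<le> \<eta> / 2"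
    by simp
  have "lam ^ N \<le> lam ^ K"
    unfolding N_def using lam_pos lam_less_1 by (simp add: power_decreasing)
  then have lam_N_half: "lam ^ N \<le> 1 / 2"
    using K by simp
  have "lam ^ N * \<gamma> \<le> lam ^ K * \<gamma>"
    using \<open>lam ^ N \<le> lam ^ K\<close> \<open>0 < \<gamma>\<close> by (simp add: mult_right_mono)
  moreover have "lam ^ K * \<gamma> < \<eta> / 4"
    using K \<open>0 < \<gamma>\<close> by (simp add: field_simps)
  ultimately have "lam ^ N * \<gamma> \<le> \<eta> / 4"
    by linarith
  with y_returns lam_N_half interpret closing X phi psi br eps lam \<gamma> \<eta> N y
    using \<open>0 < \<gamma>\<close> \<open>c \<le> eps\<close> \<open>\<eta> \<le> eps\<close> bracket_eta \<open>y \<in> X\<close>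
    unfolding \<gamma>_def N_def by unfold_locales auto
  have "\<exists>x\<in>X. (phi ^^ N) x = x"
    using exists_fixpoint_iter expansive unfolding \<gamma>_def by simp
  then show thesis
    using that N_pos by blast
qed

end

theorem lemma3p5:
  fixes X :: "'a::metric_space set" and G :: "('g, 'b) monoid_scheme"
  assumes "smale_space X phi psi br eps lam"
    and "mixing X phi"
    and "group G"
    and "smale_action G X phi act"
    and "effective_action G X act"
  shows "\<exists>P. finite P \<and> P \<noteq> {} \<and> P \<subseteq> X \<and> (\<forall>p\<in>P. periodic_point phi p) \<and>
             phi ` P = P \<and> (\<forall>g\<in>carrier G. \<forall>p\<in>P. act g p \<in> P)"
proof -
  interpret smale X phi psi br eps lam
    by (rule smale.intro) (fact assms(1))
  obtain x N where "x \<in> X" "1 \<le> N" "(phi ^^ N) x = x"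
    using exists_periodic_point[OF assms(2)] .
  define P where "P = {x \<in> X. (phi ^^ N) x = x}"
  have "\<forall>g\<in>carrier G. \<forall>p\<in>P. act g p \<in> P"
    using act_preserves_fixpoints_iter[OF assms(4)] unfolding P_def by blast
  moreover have "finite P" "phi ` P = P"
    unfolding P_def using finite_fixpoints_iter \<open>1 \<le> N\<close> phi_image_fixpoints_iter by auto
  moreover have "\<forall>p\<in>P. periodic_point phi p"
    unfolding P_def periodic_point_def using \<open>1 \<le> N\<close> by blast
  ultimately show ?thesis
    using \<open>x \<in> X\<close> \<open>(phi ^^ N) x = x\<close> unfolding P_def by blast
qed

end
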